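(* Let $G$ be a SIN topological group, $\xi=(E\xrightarrow{p}X)$ a numerable principal $G$-bundle, $C$ an $X$-groupoid, $\mathcal G$ the gauge group of $\xi$ and $\mathcal R(C,\xi)$ the set of representations of $C$ on $\xi$. Then the right action $\mathcal R(C,\xi)\times\mathcal G\to\mathcal R(C,\xi)$, $(w,\chi)\mapsto w^\chi$, is uniformly continuous for the uniform structures $\mathbf U_{\mathcal R}$ on $\mathcal R(C,\xi)$ and $\mathbf U_{\mathcal G}$ on $\mathcal G$.
   Context: SIN: the identity has a fundamental system of conjugation-invariant neighbourhoods. $X$-groupoid: a space $C$ with continuous source/target $\alpha,\beta:C\to X$, continuous associative partial composition on $\{(c_1,c_2):\alpha(c_1)=\beta(c_2)\}$ with $\alpha(c_1c_2)=\alpha(c_2)$, $\beta(c_1c_2)=\beta(c_1)$, continuous units and continuous inversion exchanging source and target. A representation of $C$ on $\xi$ is a continuous $w:C\times_XE\to E$ (fiber product over $\alpha$, $p$) with $p(w(c,z))=\beta(c)$, $w(cd,z)=w(c,w(d,z))$, $w(c^{-1},w(c,z))=z$, $w(c,zg)=w(c,z)g$. Gauge group $\mathcal G$: $G$-equivariant homeomorphisms $\chi$ of $E$ with $p\chi=p$; action $w^\chi(c,z)=\chi^{-1}(w(c,\chi(z)))$. Let $\gamma:E\times_XE\to G$ be defined by $y=z\gamma(y,z)$ and $\mathcal V_G$ the set of open symmetric neighbourhoods of $e$ in $G$. $\mathbf U_{\mathcal G}$ has fundamental entourages $\{(\chi,\tilde\chi):\gamma(\chi(z),\tilde\chi(z))\in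 V\ \forall z\in p^{-1}(K)\}$ ($K\subset X$ compact, $V\in\mathcal V_G$). $\mathbf U_{\mathcal R}$ has fundamental entourages $\mathcal O^{\mathcal R}(L,V)=\{(w,\tilde w):\gamma(w(c,z),\tilde w(c,z))\in V\ \forall(c,z)\in L\times_XE\}$ ($L\subset C$ compact, $V\in\mathcal V_G$). The product carries the product uniform structure. *)

theory Defs
  imports "HOL-Analysis.Analysis" "HOL-Algebra.Group"
begin

definition topological_group :: "'g monoid \<Rightarrow> 'g topology \<Rightarrow> bool" where
  "topological_group G TG \<longleftrightarrow> group G \<and> topspace TG = carrier G \<and>
     continuous_map (prod_topology TG TG) TG (\<lambda>(x, y). x \<otimes>\<^bsub>G\<^esub> y) \<and>
     continuous_map TG TG (\<lambda>x. inv\<^bsub>G\<^esub> x)"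

definition SIN_group :: "'g monoid \<Rightarrow> 'g topology \<Rightarrow> bool" where
  "SIN_group G TG \<longleftrightarrow> topological_group G TG \<and>
     (\<forall>U. openin TG U \<and> \<one>\<^bsub>G\<^esub> \<in> U \<longrightarrow>
        (\<exists>N. N \<subseteq> U \<and> \<one>\<^bsub>G\<^esub> \<in> TG interior_of N \<and>
             (\<forall>g\<in>carrier G. \<forall>n\<in>N. g \<otimes>\<^bsub>G\<^esub> n \<otimes>\<^bsub>G\<^esub> inv\<^bsub>G\<^esub> g \<in> N)))"

definition sym_nhds :: "'g monoid \<Rightarrow> 'g topology \<Rightarrow> 'g set set" where
  "sym_nhds G TG = {V. openin TG V \<and> \<one>\<^bsub>G\<^esub> \<in> V \<and> (\<forall>g\<in>V. inv\<^bsub>G\<^esub> g \<in> V)}"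

text \<open>\<open>act z g\<close> is the right action \<open>z g\<close> of \<open>G\<close> on \<open>E\<close>.\<close>
definition trivializing_open ::
  "'g monoid \<Rightarrow> 'g topology \<Rightarrow> 'x topology \<Rightarrow> 'e topology \<Rightarrow> ('e \<Rightarrow> 'x)
     \<Rightarrow> ('e \<Rightarrow> 'g \<Rightarrow> 'e) \<Rightarrow> 'x set \<Rightarrow> bool" where
  "trivializing_open G TG TX TE p act U \<longleftrightarrow> openin TX U \<and>
     (\<exists>\<phi>. homeomorphic_map (subtopology TE {z \<in> topspace TE. p z \<in> U})
                            (prod_topology (subtopology TX U) TG) \<phi> \<and>
          (\<forall>z \<in> topspace TE. p z \<in> U \<longrightarrow>
             fst (\<phi> z) = p z \<and>
             (\<forall>g\<in>carrier G. \<phi> (act z g) = (fst (\<phi> z), snd (\<phi> z) \<otimes>\<^bsub>G\<^esub> g))))"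

definition principal_bundle ::
  "'g monoid \<Rightarrow> 'g topology \<Rightarrow> 'x topology \<Rightarrow> 'e topology \<Rightarrow> ('e \<Rightarrow> 'x)
     \<Rightarrow> ('e \<Rightarrow> 'g \<Rightarrow> 'e) \<Rightarrow> bool" where
  "principal_bundle G TG TX TE p act \<longleftrightarrow> topological_group G TG \<and>
     continuous_map TE TX p \<and>
     continuous_map (prod_topology TE TG) TE (\<lambda>(z, g). act z g) \<and>
     (\<forall>z\<in>topspace TE. act z \<one>\<^bsub>G\<^esub> = z) \<and>
     (\<forall>z\<in>topspace TE. \<forall>g\<in>carrier G. \<forall>h\<in>carrier G.
         act (act z g) h = act z (g \<otimes>\<^bsub>G\<^esub> h)) \<and>
     (\<forall>z\<in>topspace TE. \<forall>g\<in>carrier G. p (act z g) = p z) \<and>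
     (\<forall>x\<in>topspace TX. \<exists>U. x \<in> U \<and> trivializing_open G TG TX TE p act U)"

definition numerable_bundle ::
  "'g monoid \<Rightarrow> 'g topology \<Rightarrow> 'x topology \<Rightarrow> 'e topology \<Rightarrow> ('e \<Rightarrow> 'x)
     \<Rightarrow> ('e \<Rightarrow> 'g \<Rightarrow> 'e) \<Rightarrow> bool" where
  "numerable_bundle G TG TX TE p act \<longleftrightarrow> principal_bundle G TG TX TE p act \<and>
     (\<exists>\<Phi> :: ('x \<Rightarrow> real) set.
        (\<forall>u\<in>\<Phi>. continuous_map TX euclideanreal u \<and>
                 (\<forall>x\<in>topspace TX. 0 \<le> u x \<and> u x \<le> 1) \<and>
                 (\<exists>U. trivializing_open G TG TX TE p act U \<and>
                      {x \<in> topspace TX. u x > 0} \<subseteq> U)) \<and>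
        (\<forall>x\<in>topspace TX. \<exists>N. openin TX N \<and> x \<in> N \<and>
             finite {u\<in>\<Phi>. \<exists>y\<in>N. u y \<noteq> 0}) \<and>
        (\<forall>x\<in>topspace TX. (\<Sum>u\<in>{u\<in>\<Phi>. u x \<noteq> 0}. u x) = 1))"

definition bundle_gamma :: "'g monoid \<Rightarrow> ('e \<Rightarrow> 'g \<Rightarrow> 'e) \<Rightarrow> 'e \<Rightarrow> 'e \<Rightarrow> 'g" where
  "bundle_gamma G act y z = (THE g. g \<in> carrier G \<and> y = act z g)"

definition X_groupoid ::
  "'x topology \<Rightarrow> 'c topology \<Rightarrow> ('c \<Rightarrow> 'x) \<Rightarrow> ('c \<Rightarrow> 'x) \<Rightarrow> ('c \<Rightarrow> 'c \<Rightarrow> 'c)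
     \<Rightarrow> ('x \<Rightarrow> 'c) \<Rightarrow> ('c \<Rightarrow> 'c) \<Rightarrow> bool" where
  "X_groupoid TX TC \<alpha> \<beta> cmp un ci \<longleftrightarrow>
     continuous_map TC TX \<alpha> \<and> continuous_map TC TX \<beta> \<and>
     continuous_map (subtopology (prod_topology TC TC)
                       {(c1, c2). c1 \<in> topspace TC \<and> c2 \<in> topspace TC \<and> \<alpha> c1 = \<beta> c2})
                    TC (\<lambda>(c1, c2). cmp c1 c2) \<and>
     (\<forall>c1\<in>topspace TC. \<forall>c2\<in>topspace TC. \<alpha> c1 = \<beta> c2 \<longrightarrow>
        \<alpha> (cmp c1 c2) = \<alpha> c2 \<and> \<beta> (cmp c1 c2) = \<beta> c1) \<and>
     (\<forall>c1\<in>topspace TC. \<forall>c2\<in>topspace TC. \<forall>c3\<in>topspace TC.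
        \<alpha> c1 = \<beta> c2 \<and> \<alpha> c2 = \<beta> c3 \<longrightarrow> cmp (cmp c1 c2) c3 = cmp c1 (cmp c2 c3)) \<and>
     continuous_map TX TC un \<and>
     (\<forall>x\<in>topspace TX. \<alpha> (un x) = x \<and> \<beta> (un x) = x) \<and>
     (\<forall>c\<in>topspace TC. cmp (un (\<beta> c)) c = c \<and> cmp c (un (\<alpha> c)) = c) \<and>
     continuous_map TC TC ci \<and>
     (\<forall>c\<in>topspace TC. \<alpha> (ci c) = \<beta> c \<and> \<beta> (ci c) = \<alpha> c \<and>
        cmp c (ci c) = un (\<beta> c) \<and> cmp (ci c) c = un (\<alpha> c))"

definition fibre_prod :: "'c topology \<Rightarrow> 'e topology \<Rightarrow> ('c \<Rightarrow> 'x) \<Rightarrow> ('e \<Rightarrow> 'x) \<Rightarrow> ('c \<times> 'e) set" where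
  "fibre_prod TC TE \<alpha> p = {(c, z). c \<in> topspace TC \<and> z \<in> topspace TE \<and> \<alpha> c = p z}"

definition representations ::
  "'g monoid \<Rightarrow> 'c topology \<Rightarrow> ('c \<Rightarrow> 'x) \<Rightarrow> ('c \<Rightarrow> 'x) \<Rightarrow> ('c \<Rightarrow> 'c \<Rightarrow> 'c)
     \<Rightarrow> ('c \<Rightarrow> 'c) \<Rightarrow> 'e topology \<Rightarrow> ('e \<Rightarrow> 'x) \<Rightarrow> ('e \<Rightarrow> 'g \<Rightarrow> 'e)
     \<Rightarrow> ('c \<Rightarrow> 'e \<Rightarrow> 'e) set" where
  "representations G TC \<alpha> \<beta> cmp ci TE p act = {w.
     continuous_map (subtopology (prod_topology TC TE) (fibre_prod TC TE \<alpha> p)) TE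
        (\<lambda>(c, z). w c z) \<and>
     (\<forall>(c, z)\<in>fibre_prod TC TE \<alpha> p. p (w c z) = \<beta> c) \<and>
     (\<forall>c\<in>topspace TC. \<forall>d\<in>topspace TC. \<forall>z\<in>topspace TE.
        \<alpha> c = \<beta> d \<and> \<alpha> d = p z \<longrightarrow> w (cmp c d) z = w c (w d z)) \<and>
     (\<forall>(c, z)\<in>fibre_prod TC TE \<alpha> p. w (ci c) (w c z) = z) \<and>
     (\<forall>(c, z)\<in>fibre_prod TC TE \<alpha> p. \<forall>g\<in>carrier G. w c (act z g) = act (w c z) g)}"

definition gauge_group ::
  "'g monoid \<Rightarrow> 'e topology \<Rightarrow> ('e \<Rightarrow> 'x) \<Rightarrow> ('e \<Rightarrow> 'g \<Rightarrow> 'e) \<Rightarrow> ('e \<Rightarrow> 'e) set" where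
  "gauge_group G TE p act = {chi. homeomorphic_map TE TE chi \<and>
     (\<forall>z\<in>topspace TE. p (chi z) = p z) \<and>
     (\<forall>z\<in>topspace TE. \<forall>g\<in>carrier G. chi (act z g) = act (chi z) g)}"

definition gauge_action :: "'e topology \<Rightarrow> ('c \<Rightarrow> 'e \<Rightarrow> 'e) \<Rightarrow> ('e \<Rightarrow> 'e) \<Rightarrow> 'c \<Rightarrow> 'e \<Rightarrow> 'e" where
  "gauge_action TE w chi = (\<lambda>c z. inv_into (topspace TE) chi (w c (chi z)))"

definition ent_G ::
  "'g monoid \<Rightarrow> 'e topology \<Rightarrow> ('e \<Rightarrow> 'x) \<Rightarrow> ('e \<Rightarrow> 'g \<Rightarrow> 'e) \<Rightarrow> 'x set \<Rightarrow> 'g set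
     \<Rightarrow> (('e \<Rightarrow> 'e) \<times> ('e \<Rightarrow> 'e)) set" where
  "ent_G G TE p act K V = {(chi, chi'). chi \<in> gauge_group G TE p act \<and> chi' \<in> gauge_group G TE p act \<and>
     (\<forall>z\<in>topspace TE. p z \<in> K \<longrightarrow> bundle_gamma G act (chi z) (chi' z) \<in> V)}"

definition fund_ent_G ::
  "'g monoid \<Rightarrow> 'g topology \<Rightarrow> 'x topology \<Rightarrow> 'e topology \<Rightarrow> ('e \<Rightarrow> 'x) \<Rightarrow> ('e \<Rightarrow> 'g \<Rightarrow> 'e)
     \<Rightarrow> (('e \<Rightarrow> 'e) \<times> ('e \<Rightarrow> 'e)) set set" where
  "fund_ent_G G TG TX TE p act =
     {ent_G G TE p act K V | K V. compactin TX K \<and> V \<in> sym_nhds G TG}"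

definition ent_R ::
  "'g monoid \<Rightarrow> 'c topology \<Rightarrow> ('c \<Rightarrow> 'x) \<Rightarrow> ('c \<Rightarrow> 'x) \<Rightarrow> ('c \<Rightarrow> 'c \<Rightarrow> 'c)
     \<Rightarrow> ('c \<Rightarrow> 'c) \<Rightarrow> 'e topology \<Rightarrow> ('e \<Rightarrow> 'x) \<Rightarrow> ('e \<Rightarrow> 'g \<Rightarrow> 'e) \<Rightarrow> 'c set \<Rightarrow> 'g set
     \<Rightarrow> (('c \<Rightarrow> 'e \<Rightarrow> 'e) \<times> ('c \<Rightarrow> 'e \<Rightarrow> 'e)) set" where
  "ent_R G TC \<alpha> \<beta> cmp ci TE p act L V = {(w, w').
     w \<in> representations G TC \<alpha> \<beta> cmp ci TE p act \<and>
     w' \<in> representations G TC \<alpha> \<beta> cmp ci TE p act \<and>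
     (\<forall>c\<in>L. \<forall>z\<in>topspace TE. \<alpha> c = p z \<longrightarrow> bundle_gamma G act (w c z) (w' c z) \<in> V)}"

definition fund_ent_R ::
  "'g monoid \<Rightarrow> 'g topology \<Rightarrow> 'c topology \<Rightarrow> ('c \<Rightarrow> 'x) \<Rightarrow> ('c \<Rightarrow> 'x) \<Rightarrow> ('c \<Rightarrow> 'c \<Rightarrow> 'c)
     \<Rightarrow> ('c \<Rightarrow> 'c) \<Rightarrow> 'e topology \<Rightarrow> ('e \<Rightarrow> 'x) \<Rightarrow> ('e \<Rightarrow> 'g \<Rightarrow> 'e)
     \<Rightarrow> (('c \<Rightarrow> 'e \<Rightarrow> 'e) \<times> ('c \<Rightarrow> 'e \<Rightarrow> 'e)) set set" where
  "fund_ent_R G TG TC \<alpha> \<beta> cmp ci TE p act =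
     {ent_R G TC \<alpha> \<beta> cmp ci TE p act L V | L V. compactin TC L \<and> V \<in> sym_nhds G TG}"

definition prod_ent_base :: "('a \<times> 'a) set set \<Rightarrow> ('b \<times> 'b) set set \<Rightarrow> (('a \<times> 'b) \<times> ('a \<times> 'b)) set set" where
  "prod_ent_base B1 B2 =
     {{((a, b), (a', b')). (a, a') \<in> U1 \<and> (b, b') \<in> U2} | U1 U2. U1 \<in> B1 \<and> U2 \<in> B2}"

definition unif_cont_base :: "('a \<times> 'a) set set \<Rightarrow> ('b \<times> 'b) set set \<Rightarrow> ('a \<Rightarrow> 'b) \<Rightarrow> bool" where
  "unif_cont_base Bs Bt f \<longleftrightarrow> (\<forall>N\<in>Bt. \<exists>M\<in>Bs. \<forall>(x, y)\<in>M. (f x, f y) \<in> N)"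

end

theory Submission
  imports Defs
begin

(* Write t = chi' z and q = w^chi(c, z), so that alpha c = p z = p t and p q = beta c.
   Equivariance of w, chi and chi' under the right action of G gives

     gamma(w^chi(c, z), w'^chi'(c, z)) = gamma(w(c, t), w'(c, t)) gamma(chi z, chi' z) gamma(chi q, chi' q)^-1.

   If (w, w') is W-close on a compact L and (chi, chi') is W-close over the compact set
   alpha L \<union> beta L, then for c in L all three factors lie in W, and W W W^-1 \<subseteq> V for a small
   symmetric neighbourhood W. *)

lemma homeomorphic_maps_inv_into:
  assumes "homeomorphic_map X Y f"
  shows "homeomorphic_maps X Y f (inv_into (topspace X) f)"
proof -
  have surj: "f ` topspace X = topspace Y" and inj: "inj_on f (topspace X)"
    using assms by (simp_all add: homeomorphic_imp_surjective_map homeomorphic_imp_injective_map)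
  have "continuous_map Y X (inv_into (topspace X) f)"
    using open_eq_continuous_inverse_map[of X f Y "inv_into (topspace X) f"] assms surj inj
    by (auto simp: homeomorphic_imp_continuous_map homeomorphic_imp_open_map inv_into_into
        f_inv_into_f image_subset_iff)
  then show ?thesis
    using assms surj inj
    by (auto simp: homeomorphic_maps_def homeomorphic_imp_continuous_map f_inv_into_f)
qed

context
  fixes G :: "'g monoid" (structure) and TG :: "'g topology"
  assumes tg: "topological_group G TG"
begin

interpretation group G
  using tg by (simp add: topological_group_def)

lemma topological_group_mult_nhds:
  assumes V: "openin TG V" "\<one> \<in> V"
  obtains U where "openin TG U" "\<one> \<in> U" "\<And>x y. x \<in> U \<Longrightarrow> y \<in> U \<Longrightarrow> x \<otimes> y \<in> V"
proof -
  have top: "topspace TG = carrier G"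
    and mult: "continuous_map (prod_topology TG TG) TG (\<lambda>(x, y). x \<otimes> y)"
    using tg by (simp_all add: topological_group_def)
  let ?P = "{xy \<in> topspace (prod_topology TG TG). (\<lambda>(x, y). x \<otimes> y) xy \<in> V}"
  have P: "openin (prod_topology TG TG) ?P"
    using openin_continuous_map_preimage[OF mult V(1)] .
  have one_one: "(\<one>, \<one>) \<in> ?P"
    using V(2) top by simp
  obtain A B where "openin TG A" "openin TG B" "\<one> \<in> A" "\<one> \<in> B" "A \<times> B \<subseteq> ?P"
    using openin_prod_topology_alt[THEN iffD1, OF P, rule_format, OF one_one] by (elim exE conjE)
  then show ?thesis
    by (intro that[of "A \<inter> B"]) auto
qed

lemma sym_nhds_triple_product:
  assumes V: "openin TG V" "\<one> \<in> V"
  obtains W where "W \<in> sym_nhds G TG"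
    "\<And>a b d. a \<in> W \<Longrightarrow> b \<in> W \<Longrightarrow> d \<in> W \<Longrightarrow> a \<otimes> b \<otimes> d \<in> V"
proof -
  have top: "topspace TG = carrier G" and inv_cont: "continuous_map TG TG (\<lambda>x. inv x)"
    using tg by (simp_all add: topological_group_def)
  obtain U1 where U1: "openin TG U1" "\<one> \<in> U1" "\<And>x y. x \<in> U1 \<Longrightarrow> y \<in> U1 \<Longrightarrow> x \<otimes> y \<in> V"
    using topological_group_mult_nhds[OF V] by blast
  obtain U2 where U2: "openin TG U2" "\<one> \<in> U2" "\<And>x y. x \<in> U2 \<Longrightarrow> y \<in> U2 \<Longrightarrow> x \<otimes> y \<in> U1"
    using topological_group_mult_nhds[OF U1(1,2)] by blast
  define W where "W = {x \<in> topspace TG. inv x \<in> U2} \<inter> U2"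
  have "openin TG W"
    unfolding W_def by (intro openin_Int openin_continuous_map_preimage[OF inv_cont] U2(1))
  moreover have "U2 \<subseteq> carrier G"
    using openin_subset[OF U2(1)] top by simp
  ultimately have "W \<in> sym_nhds G TG"
    using U2(2) top by (auto simp: sym_nhds_def W_def)
  moreover have "a \<otimes> b \<otimes> d \<in> V" if "a \<in> W" "b \<in> W" "d \<in> W" for a b d
  proof -
    have "a \<otimes> b \<in> U1" "d \<otimes> \<one> \<in> U1"
      using that U2(2,3) by (simp_all add: W_def)
    then show ?thesis
      using U1(3) that top by (simp add: W_def)
  qed
  ultimately show ?thesis
    using that by blast
qed

end

lemma representations_closed:
  assumes w: "w \<in> representations G TC \<alpha> \<beta> cmp ci TE p act"
    and "c \<in> topspace TC" "z \<in> topspace TE" "\<alpha> c = p z"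
  shows "w c z \<in> topspace TE" "p (w c z) = \<beta> c"
proof -
  have "continuous_map (subtopology (prod_topology TC TE) (fibre_prod TC TE \<alpha> p)) TE
      (\<lambda>(c, z). w c z)"
    using w by (simp add: representations_def)
  moreover have "(c, z) \<in> topspace (subtopology (prod_topology TC TE) (fibre_prod TC TE \<alpha> p))"
    using assms by (simp add: fibre_prod_def)
  ultimately show "w c z \<in> topspace TE"
    using continuous_map_image_subset_topspace by fastforce
  show "p (w c z) = \<beta> c"
    using assms by (auto simp: representations_def fibre_prod_def)
qed

lemma representations_equivariant:
  assumes "w \<in> representations G TC \<alpha> \<beta> cmp ci TE p act"
    and "c \<in> topspace TC" "z \<in> topspace TE" "\<alpha> c = p z" "g \<in> carrier G"
  shows "w c (act z g) = act (w c z) g"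
  using assms by (auto simp: representations_def fibre_prod_def)

lemma gauge_group_closed:
  assumes "chi \<in> gauge_group G TE p act" "z \<in> topspace TE"
  shows "chi z \<in> topspace TE" "p (chi z) = p z"
  using assms homeomorphic_imp_surjective_map by (fastforce simp: gauge_group_def)+

lemma gauge_group_equivariant:
  assumes "chi \<in> gauge_group G TE p act" "z \<in> topspace TE" "g \<in> carrier G"
  shows "chi (act z g) = act (chi z) g"
  using assms by (simp add: gauge_group_def)

lemma gauge_group_homeomorphic_maps:
  assumes "chi \<in> gauge_group G TE p act"
  shows "homeomorphic_maps TE TE chi (inv_into (topspace TE) chi)"
  using assms by (simp add: gauge_group_def homeomorphic_maps_inv_into)

lemma continuous_map_gauge_action:
  assumes w: "continuous_map (subtopology (prod_topology TC TE) (fibre_prod TC TE \<alpha> p)) TE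
                (\<lambda>(c, z). w c z)"
    and chi: "chi \<in> gauge_group G TE p act"
  shows "continuous_map (subtopology (prod_topology TC TE) (fibre_prod TC TE \<alpha> p)) TE
           (\<lambda>(c, z). gauge_action TE w chi c z)"
proof -
  let ?S = "subtopology (prod_topology TC TE) (fibre_prod TC TE \<alpha> p)"
  have maps: "homeomorphic_maps TE TE chi (inv_into (topspace TE) chi)"
    using gauge_group_homeomorphic_maps[OF chi] .
  have "continuous_map ?S TE (chi \<circ> snd)"
    using maps by (auto simp: homeomorphic_maps_def
        intro: continuous_map_compose continuous_map_from_subtopology continuous_map_snd)
  then have "continuous_map ?S ?S (\<lambda>x. (fst x, chi (snd x)))"
    using gauge_group_closed[OF chi]
    by (auto simp: continuous_map_in_subtopology continuous_map_paired o_def fibre_prod_def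
        intro: continuous_map_from_subtopology continuous_map_fst)
  then have "continuous_map ?S TE
      (inv_into (topspace TE) chi \<circ> (\<lambda>(c, z). w c z) \<circ> (\<lambda>x. (fst x, chi (snd x))))"
    using w maps by (auto simp: homeomorphic_maps_def intro: continuous_map_compose)
  then show ?thesis
    by (simp add: gauge_action_def case_prod_unfold o_def)
qed

locale principal_G_bundle =
  fixes G :: "'g monoid" (structure) and TG :: "'g topology" and TX :: "'x topology"
    and TE :: "'e topology" and p :: "'e \<Rightarrow> 'x" and act :: "'e \<Rightarrow> 'g \<Rightarrow> 'e"
  assumes principal_bundle: "principal_bundle G TG TX TE p act"
begin

lemma topological_group: "topological_group G TG"
  using principal_bundle by (simp add: principal_bundle_def)

sublocale group G
  using topological_group by (simp add: topological_group_def)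

lemma act_closed:
  assumes "z \<in> topspace TE" "g \<in> carrier G"
  shows "act z g \<in> topspace TE"
proof -
  have "continuous_map (prod_topology TE TG) TE (\<lambda>(z, g). act z g)" "topspace TG = carrier G"
    using principal_bundle topological_group by (simp_all add: principal_bundle_def topological_group_def)
  then show ?thesis
    using assms continuous_map_image_subset_topspace by fastforce
qed

lemma act_one: "z \<in> topspace TE \<Longrightarrow> act z \<one> = z"
  and act_act: "z \<in> topspace TE \<Longrightarrow> g \<in> carrier G \<Longrightarrow> h \<in> carrier G \<Longrightarrow>
    act (act z g) h = act z (g \<otimes> h)"
  and p_act: "z \<in> topspace TE \<Longrightarrow> g \<in> carrier G \<Longrightarrow> p (act z g) = p z"
  using principal_bundle by (simp_all add: principal_bundle_def)

lemma p_closed: "z \<in> topspace TE \<Longrightarrow> p z \<in> topspace TX"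
  using principal_bundle continuous_map_image_subset_topspace
  unfolding principal_bundle_def by fastforce

lemma act_act_inv: "z \<in> topspace TE \<Longrightarrow> g \<in> carrier G \<Longrightarrow> act (act z g) (inv g) = z"
  by (simp add: act_act act_one)

text \<open>The coordinate is the second component of a local trivialization.\<close>
lemma fibre_coordinate:
  assumes z: "z \<in> topspace TE"
  shows "\<exists>s. inj_on s {y \<in> topspace TE. p y = p z} \<and>
           s \<in> {y \<in> topspace TE. p y = p z} \<rightarrow> carrier G \<and>
           (\<forall>y \<in> {y \<in> topspace TE. p y = p z}. \<forall>g\<in>carrier G. s (act y g) = s y \<otimes> g)"
proof -
  obtain U where "p z \<in> U" "trivializing_open G TG TX TE p act U"
    using principal_bundle p_closed[OF z] unfolding principal_bundle_def by blast
  then obtain \<phi> where U: "p z \<in> U"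
    and hm: "homeomorphic_map (subtopology TE {y \<in> topspace TE. p y \<in> U})
                              (prod_topology (subtopology TX U) TG) \<phi>"
    and \<phi>: "\<And>y. y \<in> topspace TE \<Longrightarrow> p y \<in> U \<Longrightarrow>
             fst (\<phi> y) = p y \<and> (\<forall>g\<in>carrier G. \<phi> (act y g) = (fst (\<phi> y), snd (\<phi> y) \<otimes> g))"
    unfolding trivializing_open_def by blast
  have "inj_on \<phi> {y \<in> topspace TE. p y \<in> U}"
    using homeomorphic_imp_injective_map[OF hm] by (simp add: Int_absorb1)
  then have "inj_on (\<lambda>y. snd (\<phi> y)) {y \<in> topspace TE. p y = p z}"
    using U \<phi> by (auto simp: inj_on_def prod_eq_iff)
  moreover have "\<phi> y \<in> (topspace TX \<inter> U) \<times> topspace TG" if "y \<in> topspace TE" "p y \<in> U" for y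
    using homeomorphic_imp_surjective_map[OF hm] that by auto
  then have "(\<lambda>y. snd (\<phi> y)) \<in> {y \<in> topspace TE. p y = p z} \<rightarrow> carrier G"
    using U topological_group by (force simp: topological_group_def mem_Times_iff)
  ultimately show ?thesis
    using U \<phi> by auto
qed

lemma act_inj:
  assumes z: "z \<in> topspace TE" and "g \<in> carrier G" "h \<in> carrier G" "act z g = act z h"
  shows "g = h"
proof -
  obtain s where s: "s z \<in> carrier G" "\<forall>g\<in>carrier G. s (act z g) = s z \<otimes> g"
    using fibre_coordinate[OF z] z by blast
  then have "s z \<otimes> g = s z \<otimes> h"
    using assms by metis
  then show ?thesis
    using assms s(1) by simp
qed

lemma act_transitive_on_fibres:
  assumes z: "z \<in> topspace TE" and y: "y \<in> topspace TE" "p y = p z"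
  obtains g where "g \<in> carrier G" "y = act z g"
proof -
  obtain s where s_inj: "inj_on s {y \<in> topspace TE. p y = p z}"
    and s_closed: "s \<in> {y \<in> topspace TE. p y = p z} \<rightarrow> carrier G"
    and s_act: "\<forall>y \<in> {y \<in> topspace TE. p y = p z}. \<forall>g\<in>carrier G. s (act y g) = s y \<otimes> g"
    using fibre_coordinate[OF z] by blast
  have sz: "s z \<in> carrier G" and sy: "s y \<in> carrier G"
    using s_closed y z by auto
  define g where "g = inv (s z) \<otimes> s y"
  have g: "g \<in> carrier G"
    using sz sy by (simp add: g_def)
  have "s (act z g) = s y"
    using s_act g sz sy z by (simp add: g_def m_assoc[symmetric])
  then have "y = act z g"
    using inj_onD[OF s_inj] y z act_closed[OF z g] p_act[OF z g] by simp
  with g show ?thesis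
    using that by blast
qed

lemma bundle_gamma_act:
  assumes "z \<in> topspace TE" "g \<in> carrier G"
  shows "bundle_gamma G act (act z g) z = g"
  unfolding bundle_gamma_def
  using assms act_inj by (intro the_equality) auto

lemma
  assumes z: "z \<in> topspace TE" and "y \<in> topspace TE" "p y = p z"
  shows bundle_gamma_closed: "bundle_gamma G act y z \<in> carrier G"
    and act_bundle_gamma: "y = act z (bundle_gamma G act y z)"
  using act_transitive_on_fibres[OF assms] bundle_gamma_act[OF z] by metis+

lemma inv_into_gauge_group:
  assumes chi: "chi \<in> gauge_group G TE p act"
  shows "inv_into (topspace TE) chi \<in> gauge_group G TE p act"
proof -
  let ?\<psi> = "inv_into (topspace TE) chi"
  have maps: "homeomorphic_maps TE TE chi ?\<psi>"
    using gauge_group_homeomorphic_maps[OF chi] .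
  then have \<psi>_closed: "?\<psi> v \<in> topspace TE" and \<psi>_right: "chi (?\<psi> v) = v"
    and \<psi>_left: "?\<psi> (chi v) = v" if "v \<in> topspace TE" for v
    using that continuous_map_image_subset_topspace
    by (fastforce simp: homeomorphic_maps_def)+
  have "?\<psi> (act v g) = act (?\<psi> v) g" if "v \<in> topspace TE" "g \<in> carrier G" for v g
    using that \<psi>_closed \<psi>_right \<psi>_left act_closed gauge_group_equivariant[OF chi] by metis
  moreover have "p (?\<psi> v) = p v" if "v \<in> topspace TE" for v
    using that \<psi>_closed \<psi>_right gauge_group_closed[OF chi] by metis
  ultimately show ?thesis
    using maps by (simp add: gauge_group_def homeomorphic_maps_map)
qed

lemma gauge_action_in_representations:
  assumes w: "w \<in> representations G TC \<alpha> \<beta> cmp ci TE p act"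
    and chi: "chi \<in> gauge_group G TE p act"
  shows "gauge_action TE w chi \<in> representations G TC \<alpha> \<beta> cmp ci TE p act"
proof -
  let ?\<psi> = "inv_into (topspace TE) chi"
  let ?F = "fibre_prod TC TE \<alpha> p"
  let ?S = "subtopology (prod_topology TC TE) ?F"
  have \<psi>: "?\<psi> \<in> gauge_group G TE p act"
    using inv_into_gauge_group[OF chi] .
  have chi_\<psi>: "chi (?\<psi> v) = v" and \<psi>_chi: "?\<psi> (chi v) = v" if "v \<in> topspace TE" for v
    using that gauge_group_homeomorphic_maps[OF chi] by (simp_all add: homeomorphic_maps_def)
  have shift: "(c, chi z) \<in> ?F" if "(c, z) \<in> ?F" for c z
    using that gauge_group_closed[OF chi] by (auto simp: fibre_prod_def)
  have F: "c \<in> topspace TC" "z \<in> topspace TE" "\<alpha> c = p z" if "(c, z) \<in> ?F" for c z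
    using that by (simp_all add: fibre_prod_def)
  have "continuous_map ?S TE (\<lambda>(c, z). gauge_action TE w chi c z)"
    using w chi by (simp add: representations_def continuous_map_gauge_action)
  moreover have "p (gauge_action TE w chi c z) = \<beta> c" if "(c, z) \<in> ?F" for c z
    using F[OF shift[OF that]] representations_closed[OF w] gauge_group_closed[OF \<psi>]
    by (simp add: gauge_action_def)
  moreover have "gauge_action TE w chi (cmp c d) z = gauge_action TE w chi c (gauge_action TE w chi d z)"
    if "c \<in> topspace TC" "d \<in> topspace TC" "z \<in> topspace TE" "\<alpha> c = \<beta> d" "\<alpha> d = p z" for c d z
    using that w chi_\<psi> representations_closed[OF w] gauge_group_closed[OF chi]
    by (simp add: gauge_action_def representations_def)
  moreover have "gauge_action TE w chi (ci c) (gauge_action TE w chi c z) = z" if "(c, z) \<in> ?F" for c z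
  proof -
    have "w (ci c) (w c (chi z)) = chi z"
      using w shift[OF that] by (auto simp: representations_def)
    then show ?thesis
      using chi_\<psi> \<psi>_chi representations_closed[OF w] F[OF shift[OF that]] F[OF that]
      by (simp add: gauge_action_def)
  qed
  moreover have "gauge_action TE w chi c (act z g) = act (gauge_action TE w chi c z) g"
    if "(c, z) \<in> ?F" "g \<in> carrier G" for c z g
    using F[OF shift[OF that(1)]] F[OF that(1)] that(2) representations_closed[OF w]
      representations_equivariant[OF w] gauge_group_equivariant[OF chi] gauge_group_equivariant[OF \<psi>]
    by (simp add: gauge_action_def)
  ultimately show ?thesis
    by (auto simp: representations_def)
qed

lemma bundle_gamma_gauge_action:
  assumes w: "w \<in> representations G TC \<alpha> \<beta> cmp ci TE p act"
    and w': "w' \<in> representations G TC \<alpha> \<beta> cmp ci TE p act"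
    and chi: "chi \<in> gauge_group G TE p act" and chi': "chi' \<in> gauge_group G TE p act"
    and c: "c \<in> topspace TC" and z: "z \<in> topspace TE" "\<alpha> c = p z"
  defines "t \<equiv> chi' z" and "q \<equiv> gauge_action TE w chi c z"
  shows "bundle_gamma G act q (gauge_action TE w' chi' c z) =
           bundle_gamma G act (w c t) (w' c t) \<otimes> bundle_gamma G act (chi z) (chi' z)
             \<otimes> inv (bundle_gamma G act (chi q) (chi' q))"
proof -
  let ?\<psi>' = "inv_into (topspace TE) chi'"
  define u' where "u' = w' c t"
  define a where "a = bundle_gamma G act (w c t) u'"
  define b where "b = bundle_gamma G act (chi z) t"
  define d where "d = bundle_gamma G act (chi q) (chi' q)"
  have t: "t \<in> topspace TE" "\<alpha> c = p t"
    using gauge_group_closed[OF chi' z(1)] z(2) by (simp_all add: t_def)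
  have u': "u' \<in> topspace TE" "p u' = \<beta> c"
    using representations_closed[OF w' c t(1)] t(2) by (simp_all add: u'_def)
  have a: "a \<in> carrier G" "w c t = act u' a"
    using representations_closed[OF w c t(1)] t(2) u'
      bundle_gamma_closed[OF u'(1)] act_bundle_gamma[OF u'(1)] by (simp_all add: a_def)
  have b: "b \<in> carrier G" "chi z = act t b"
    using gauge_group_closed[OF chi z(1)] gauge_group_closed[OF chi' z(1)]
      bundle_gamma_closed[OF t(1)] act_bundle_gamma[OF t(1)] by (simp_all add: b_def t_def)
  have q: "q \<in> topspace TE" "p q = \<beta> c"
    using representations_closed[OF gauge_action_in_representations[OF w chi] c z]
    by (simp_all add: q_def)
  have d: "d \<in> carrier G" "chi q = act (chi' q) d"
    using gauge_group_closed[OF chi q(1)] gauge_group_closed[OF chi' q(1)]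
      bundle_gamma_closed[of "chi' q" "chi q"] act_bundle_gamma[of "chi' q" "chi q"]
    by (simp_all add: d_def)
  have "chi q = w c (chi z)"
    using gauge_group_homeomorphic_maps[OF chi] representations_closed[OF w c]
      gauge_group_closed[OF chi z(1)] z(2)
    by (simp add: q_def gauge_action_def homeomorphic_maps_def)
  also have "\<dots> = act u' (a \<otimes> b)"
    using representations_equivariant[OF w c t] b a act_act[OF u'(1)] by simp
  finally have "chi' q = act u' (a \<otimes> b \<otimes> inv d)"
    using act_act_inv[OF gauge_group_closed(1)[OF chi' q(1)] d(1)] d(2) a(1) b(1) d(1)
      act_act[OF u'(1)]
    by simp
  then have "q = act (?\<psi>' u') (a \<otimes> b \<otimes> inv d)"
    using gauge_group_homeomorphic_maps[OF chi'] q(1) u'(1) a(1) b(1) d(1)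
      gauge_group_equivariant[OF inv_into_gauge_group[OF chi']]
    by (metis homeomorphic_maps_def inv_closed m_closed)
  then have "bundle_gamma G act q (?\<psi>' u') = a \<otimes> b \<otimes> inv d"
    using bundle_gamma_act gauge_group_closed(1)[OF inv_into_gauge_group[OF chi'] u'(1)]
      a(1) b(1) d(1)
    by simp
  then show ?thesis
    by (simp add: a_def b_def d_def u'_def t_def gauge_action_def)
qed

lemma gauge_action_ent_R:
  assumes w: "(w, w') \<in> ent_R G TC \<alpha> \<beta> cmp ci TE p act L W"
    and chi: "(chi, chi') \<in> ent_G G TE p act K W"
    and L: "L \<subseteq> topspace TC" "\<alpha> ` L \<union> \<beta> ` L \<subseteq> K"
    and W: "\<And>a b d. a \<in> W \<Longrightarrow> b \<in> W \<Longrightarrow> d \<in> W \<Longrightarrow> a \<otimes> b \<otimes> inv d \<in> V"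
  shows "(gauge_action TE w chi, gauge_action TE w' chi') \<in> ent_R G TC \<alpha> \<beta> cmp ci TE p act L V"
proof -
  let ?R = "representations G TC \<alpha> \<beta> cmp ci TE p act"
  have reps: "w \<in> ?R" "w' \<in> ?R"
    and close_w: "\<And>c z. c \<in> L \<Longrightarrow> z \<in> topspace TE \<Longrightarrow> \<alpha> c = p z \<Longrightarrow>
      bundle_gamma G act (w c z) (w' c z) \<in> W"
    using w by (auto simp: ent_R_def)
  have gauges: "chi \<in> gauge_group G TE p act" "chi' \<in> gauge_group G TE p act"
    and close_chi: "\<And>z. z \<in> topspace TE \<Longrightarrow> p z \<in> K \<Longrightarrow> bundle_gamma G act (chi z) (chi' z) \<in> W"
    using chi by (auto simp: ent_G_def)
  have "bundle_gamma G act (gauge_action TE w chi c z) (gauge_action TE w' chi' c z) \<in> V"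
    if c: "c \<in> L" and z: "z \<in> topspace TE" "\<alpha> c = p z" for c z
  proof -
    let ?q = "gauge_action TE w chi c z"
    have cC: "c \<in> topspace TC"
      using c L(1) by blast
    have "?q \<in> topspace TE" "p ?q = \<beta> c"
      using representations_closed[OF gauge_action_in_representations[OF reps(1) gauges(1)] cC z]
      by simp_all
    then show ?thesis
      unfolding bundle_gamma_gauge_action[OF reps gauges cC z]
      using gauge_group_closed[OF gauges(2) z(1)] z c L(2)
      by (intro W close_w close_chi) auto
  qed
  then show ?thesis
    using reps gauges gauge_action_in_representations by (auto simp: ent_R_def)
qed

lemma gauge_action_uniformly_continuous:
  assumes "continuous_map TC TX \<alpha>" "continuous_map TC TX \<beta>"
  shows "unif_cont_base
           (prod_ent_base (fund_ent_R G TG TC \<alpha> \<beta> cmp ci TE p act) (fund_ent_G G TG TX TE p act))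
           (fund_ent_R G TG TC \<alpha> \<beta> cmp ci TE p act)
           (\<lambda>(w, chi). gauge_action TE w chi)"
  unfolding unif_cont_base_def
proof
  let ?B = "prod_ent_base (fund_ent_R G TG TC \<alpha> \<beta> cmp ci TE p act) (fund_ent_G G TG TX TE p act)"
  let ?f = "\<lambda>(w, chi). gauge_action TE w chi"
  fix N assume "N \<in> fund_ent_R G TG TC \<alpha> \<beta> cmp ci TE p act"
  then obtain L V where N: "N = ent_R G TC \<alpha> \<beta> cmp ci TE p act L V"
    and L: "compactin TC L" and V: "openin TG V" "\<one> \<in> V"
    by (auto simp: fund_ent_R_def sym_nhds_def)
  obtain W where W: "W \<in> sym_nhds G TG"
    and W3: "\<And>a b d. a \<in> W \<Longrightarrow> b \<in> W \<Longrightarrow> d \<in> W \<Longrightarrow> a \<otimes> b \<otimes> d \<in> V"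
    using sym_nhds_triple_product[OF topological_group V] by blast
  define K where "K = \<alpha> ` L \<union> \<beta> ` L"
  have K: "compactin TX K"
    unfolding K_def using L assms by (intro compactin_Un image_compactin)
  define M where "M = {((w, chi), (w', chi')). (w, w') \<in> ent_R G TC \<alpha> \<beta> cmp ci TE p act L W \<and>
                         (chi, chi') \<in> ent_G G TE p act K W}"
  have "M \<in> ?B"
    unfolding prod_ent_base_def fund_ent_R_def fund_ent_G_def M_def using L K W by blast
  moreover have "(?f x, ?f y) \<in> N"
    if "(x, y) \<in> M" for x y
    using that W W3 compactin_subset_topspace[OF L] unfolding N M_def K_def
    by (auto simp: sym_nhds_def intro!: gauge_action_ent_R)
  ultimately show "\<exists>M \<in> ?B. \<forall>(x, y) \<in> M. (?f x, ?f y) \<in> N"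
    by blast
qed

end

theorem proposition3p3:
  fixes G :: "'g monoid" and TG :: "'g topology"
    and TX :: "'x topology" and TE :: "'e topology" and p :: "'e \<Rightarrow> 'x"
    and act :: "'e \<Rightarrow> 'g \<Rightarrow> 'e"
    and TC :: "'c topology" and \<alpha> \<beta> :: "'c \<Rightarrow> 'x" and cmp :: "'c \<Rightarrow> 'c \<Rightarrow> 'c"
    and un :: "'x \<Rightarrow> 'c" and ci :: "'c \<Rightarrow> 'c"
  assumes "SIN_group G TG"
    and "numerable_bundle G TG TX TE p act"
    and "X_groupoid TX TC \<alpha> \<beta> cmp un ci"
  shows "(\<forall>w\<in>representations G TC \<alpha> \<beta> cmp ci TE p act. \<forall>chi\<in>gauge_group G TE p act.
            gauge_action TE w chi \<in> representations G TC \<alpha> \<beta> cmp ci TE p act) \<and>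
         unif_cont_base
           (prod_ent_base (fund_ent_R G TG TC \<alpha> \<beta> cmp ci TE p act) (fund_ent_G G TG TX TE p act))
           (fund_ent_R G TG TC \<alpha> \<beta> cmp ci TE p act)
           (\<lambda>(w, chi). gauge_action TE w chi)"
proof -
  interpret principal_G_bundle G TG TX TE p act
    using assms(2) by unfold_locales (simp add: numerable_bundle_def)
  have "continuous_map TC TX \<alpha>" "continuous_map TC TX \<beta>"
    using assms(3) by (simp_all add: X_groupoid_def)
  then show ?thesis
    using gauge_action_in_representations gauge_action_uniformly_continuous by blast
qed

end
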